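(* Let $\mathbf b=b_0b_1b_2\cdots\in\{1,-1\}^{\mathbb N}$. For each $t\ge2$ and $1\le u<t$, the vector \[V:=\sum_{p=0}^{2^{t-u}-1}\Delta(\ell_{t-1}+2^u p,\;2^u,\;2^{t-u})\] is a constant vector (all its $2^{t-u}$ entries are equal).
   Context: For integers $a$ and $N\ge1$, $(a \bmod N)$ denotes the unique integer in $\{0,\dots,N-1\}$ congruent to $a$ modulo $N$; we write $a\succ c \pmod N$ iff $(a\bmod N)>(c\bmod N)$. For $b\in\{-1,1\}$, $k\ge0$ and integers $0\le\ell\le n$, let $\varepsilon_{k,b}(\ell,n)=1$ if $n-\ell \succ (2+b)\cdot 2^k-(\ell+1) \pmod{2^{k+2}}$ and $\varepsilon_{k,b}(\ell,n)=0$ otherwise. For $s\ge0$, $d,m\ge1$, $\mathcal E_{k,b}(s,d,m)=\big(\varepsilon_{k,b}(s+jd,s+(j+1)d)\big)_{j=0}^{m-1}$ and $\Delta(s,d,m)=\sum_{k=0}^\infty\mathcal E_{k,b_k}(s,d,m)$. For $x_0,x_1,x_2,x_3\in\{1,-1\}$, $\ell(x_0,x_1,x_2,x_3)$ is given by the table (listing $(x_0,x_1,x_2,x_3)\mapsto \ell$): $(1,1,1,1)\mapsto7$, $(-1,1,1,1)\mapsto1$, $(1,-1,1,1)\mapsto3$, $(-1,-1,1,1)\mapsto5$, $(1,1,-1,1)\mapsto7$, $(-1,1,-1,1)\mapsto9$, $(1,-1,-1,1)\mapsto11$, $(-1,-1,-1,1)\mapsto5$, $(1,1,1,-1)\mapsto23$,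 $(-1,1,1,-1)\mapsto1$, $(1,-1,1,-1)\mapsto3$, $(-1,-1,1,-1)\mapsto21$, $(1,1,-1,-1)\mapsto23$, $(-1,1,-1,-1)\mapsto9$, $(1,-1,-1,-1)\mapsto11$, $(-1,-1,-1,-1)\mapsto21$. For $t\ge0$, $\ell_t:=2^t\,\ell(b_t,b_{t+1},b_{t+2},b_{t+3})$. *)

theory Defs
  imports Complex_Main
begin

definition eps :: "nat \<Rightarrow> int \<Rightarrow> int \<Rightarrow> int \<Rightarrow> int" where
  "eps k b l n = (if (n - l) mod 2^(k+2) > ((2 + b) * 2^k - (l + 1)) mod 2^(k+2) then 1 else 0)"

text \<open>Vectors of length m are represented as functions on indices j < m.
  E_{k,b}(s,d,m), entry j.\<close>
definition Evec :: "nat \<Rightarrow> int \<Rightarrow> nat \<Rightarrow> nat \<Rightarrow> nat \<Rightarrow> int" where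
  "Evec k b s d j = eps k b (int s + int j * int d) (int s + (int j + 1) * int d)"

definition Delta :: "(nat \<Rightarrow> int) \<Rightarrow> nat \<Rightarrow> nat \<Rightarrow> nat \<Rightarrow> real" where
  "Delta b s d j = (\<Sum>k. real_of_int (Evec k (b k) s d j))"

definition ltab :: "int \<Rightarrow> int \<Rightarrow> int \<Rightarrow> int \<Rightarrow> nat" where
  "ltab x0 x1 x2 x3 =
    (if x3 = 1 then
       (if x2 = 1 then
          (if x1 = 1 then (if x0 = 1 then 7 else 1) else (if x0 = 1 then 3 else 5))
        else
          (if x1 = 1 then (if x0 = 1 then 7 else 9) else (if x0 = 1 then 11 else 5)))
     else
       (if x2 = 1 then
          (if x1 = 1 then (if x0 = 1 then 23 else 1) else (if x0 = 1 then 3 else 21))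
        else
          (if x1 = 1 then (if x0 = 1 then 23 else 9) else (if x0 = 1 then 11 else 21))))"

definition ellt :: "(nat \<Rightarrow> int) \<Rightarrow> nat \<Rightarrow> nat" where
  "ellt b t = 2^t * ltab (b t) (b (t+1)) (b (t+2)) (b (t+3))"

end

theory Submission
  imports Defs
begin

text \<open>Entry \<open>j\<close> of the summed vector adds up the window counts \<open>\<Delta>\<close> of the \<open>2^(t-u)\<close>
  consecutive windows of width \<open>2^u\<close> starting at window \<open>j\<close> of the grid anchored at
  \<open>\<ell>\<^sub>t\<^sub>-\<^sub>1\<close>, so it suffices that moving a window inside \<open>[\<ell>\<^sub>t\<^sub>-\<^sub>1, \<ell>\<^sub>t\<^sub>-\<^sub>1 + 2^t)\<close> by \<open>2^t\<close>
  leaves its count unchanged. Level \<open>k\<close> contributes 1 iff the window contains a point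
  \<open>\<equiv> (2 + b\<^sub>k) 2^k (mod 2^(k+2))\<close>. For \<open>k \<le> t - 2\<close> this is invariant under the shift; for
  \<open>k \<ge> t - 1\<close> the only possible such point is \<open>\<ell>\<^sub>t\<^sub>-\<^sub>1 + 2^(t-1)\<close>, resp.
  \<open>\<ell>\<^sub>t\<^sub>-\<^sub>1 + 2^t + 2^(t-1)\<close>, and the table for \<open>\<ell>\<close> is designed so that these two points are
  hit at the same number of levels.\<close>

definition marked :: "int \<Rightarrow> nat \<Rightarrow> int \<Rightarrow> bool" where
  "marked \<beta> k x \<longleftrightarrow> x mod 2^(k+2) = ((2 + \<beta>) * 2^k) mod 2^(k+2)"

lemma eps_shift_period: "eps k \<beta> (l + 2^(k+2) * m) (n + 2^(k+2) * m) = eps k \<beta> l n"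
proof -
  have "((2 + \<beta>) * 2^k - (l + 2^(k+2) * m + 1)) mod 2^(k+2)
      = ((2 + \<beta>) * 2^k - (l + 1) + (-m) * 2^(k+2)) mod 2^(k+2)"
    by (simp add: algebra_simps)
  also have "\<dots> = ((2 + \<beta>) * 2^k - (l + 1)) mod 2^(k+2)" by (rule mod_mult_self1)
  finally show ?thesis unfolding eps_def by (simp add: algebra_simps)
qed

lemma eps_shift_power:
  assumes "k + 2 \<le> t"
  shows "eps k \<beta> (l + 2^t) (n + 2^t) = eps k \<beta> l n"
proof -
  have "(2::int)^t = 2^(k+2) * 2^(t-(k+2))" using assms by (metis le_add_diff_inverse power_add)
  then show ?thesis by (metis eps_shift_period)
qed

lemma eps_eq_of_bool_marked:
  assumes "0 < d" "d < 2^(k+2)"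
  shows "eps k \<beta> l (l + d) = of_bool (\<exists>x. l < x \<and> x \<le> l + d \<and> marked \<beta> k x)"
proof -
  define P :: int where "P = 2^(k+2)"
  define c where "c = (2 + \<beta>) * 2^k"
  have "0 < P" by (simp add: P_def)
  have "(d > (c - (l+1)) mod P) \<longleftrightarrow> (\<exists>x. l < x \<and> x \<le> l + d \<and> x mod P = c mod P)"
  proof
    assume hit: "d > (c - (l+1)) mod P"
    let ?x = "l + 1 + (c - (l+1)) mod P"
    have "?x mod P = c mod P" by (simp add: mod_add_right_eq)
    moreover have "l < ?x" using \<open>0 < P\<close> pos_mod_sign[of P "c - (l+1)"] by linarith
    moreover have "?x \<le> l + d" using hit by simp
    ultimately show "\<exists>x. l < x \<and> x \<le> l + d \<and> x mod P = c mod P" by blast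
  next
    assume "\<exists>x. l < x \<and> x \<le> l + d \<and> x mod P = c mod P"
    then obtain x where x: "l < x" "x \<le> l + d" "x mod P = c mod P" by blast
    have "(c - (l+1)) mod P = (x - (l+1)) mod P" by (rule mod_diff_cong) (use x in auto)
    also have "\<dots> = x - (l+1)" using x assms by (intro mod_pos_pos_trivial) (auto simp: P_def)
    finally show "d > (c - (l+1)) mod P" using x by simp
  qed
  moreover have "d mod P = d" using assms by (intro mod_pos_pos_trivial) (auto simp: P_def)
  ultimately show ?thesis unfolding eps_def marked_def P_def c_def by simp
qed

lemma marked_scale: "marked \<beta> (k + s) (2^s * a) \<longleftrightarrow> marked \<beta> k a"
proof -
  have "(2::int)^(k+s+2) = 2^s * 2^(k+2)" "(2 + \<beta>) * (2::int)^(k+s) = 2^s * ((2 + \<beta>) * 2^k)"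
    by (simp_all add: power_add)
  then show ?thesis unfolding marked_def by (simp add: mod_mult_mult1)
qed

lemma not_marked_below:
  assumes "0 \<le> a" "a < 2^k" "\<beta> = 1 \<or> \<beta> = -1"
  shows "\<not> marked \<beta> k a"
proof -
  have P: "(2::int)^(k+2) = 4 * 2^k" by simp
  have "a mod 2^(k+2) = a" "((2 + \<beta>) * 2^k) mod 2^(k+2) = (2 + \<beta>) * 2^k"
    using assms by (auto simp: P intro!: mod_pos_pos_trivial)
  moreover have "a < (2 + \<beta>) * 2^k" using assms by auto
  ultimately show ?thesis unfolding marked_def by simp
qed

lemma marked_imp_dvd:
  assumes "marked \<beta> k x" "s \<le> k"
  shows "(2::int)^s dvd x"
proof -
  have "2^(k+2) dvd x - (2 + \<beta>) * 2^k"
    using assms(1) unfolding marked_def by (rule mod_eq_dvd_iff[THEN iffD1])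
  moreover have "(2::int)^s dvd 2^(k+2)" "(2::int)^s dvd 2^k"
    using assms(2) by (simp_all add: le_imp_power_dvd)
  ultimately have "2^s dvd x - (2 + \<beta>) * 2^k" "2^s dvd (2 + \<beta>) * 2^k" by (auto intro: dvd_trans)
  then show ?thesis by (metis diff_add_cancel dvd_add)
qed

lemma eps_eq_0_below:
  assumes "0 \<le> l" "0 < d" "l + d < 2^k" "\<beta> = 1 \<or> \<beta> = -1"
  shows "eps k \<beta> l (l + d) = 0"
proof -
  have "(2::int)^k < 2^(k+2)" by simp
  then have "eps k \<beta> l (l + d) = of_bool (\<exists>x. l < x \<and> x \<le> l + d \<and> marked \<beta> k x)"
    using assms by (intro eps_eq_of_bool_marked) auto
  also have "\<dots> = 0" using assms not_marked_below by force
  finally show ?thesis .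
qed

lemma eps_eq_single_candidate:
  fixes a l d L :: int
  assumes "s \<le> k" "L = 2^s * a" "L \<le> l" "0 < d" "l + d < L + 2^(s+1)"
  shows "eps k \<beta> l (l + d) = of_bool (l < L + 2^s \<and> L + 2^s \<le> l + d \<and> marked \<beta> k (L + 2^s))"
proof -
  have "(2::int)^(s+1) \<le> 2^(k+2)" by (rule power_increasing) (use assms(1) in auto)
  then have "eps k \<beta> l (l + d) = of_bool (\<exists>x. l < x \<and> x \<le> l + d \<and> marked \<beta> k x)"
    using assms by (intro eps_eq_of_bool_marked) auto
  moreover have "x = L + 2^s" if x: "l < x" "x \<le> l + d" "marked \<beta> k x" for x
  proof -
    \<comment> \<open>Marked points are multiples of \<open>2^s\<close>, and \<open>L + 2^s\<close> is the only one strictly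
      between \<open>L\<close> and \<open>L + 2^(s+1)\<close>.\<close>
    obtain m where m: "x = 2^s * m" using marked_imp_dvd[OF x(3) assms(1)] by blast
    have "2^s * a < 2^s * m" using x(1) m assms(2,3) by linarith
    moreover have "2^s * m < 2^s * (a + 2)" using x(2) m assms(2,5) by (simp add: algebra_simps)
    ultimately have "m = a + 1" by (simp add: mult_less_cancel_left_pos)
    then show ?thesis using m assms(2) by (simp add: algebra_simps)
  qed
  then have "(\<exists>x. l < x \<and> x \<le> l + d \<and> marked \<beta> k x)
      \<longleftrightarrow> l < L + 2^s \<and> L + 2^s \<le> l + d \<and> marked \<beta> k (L + 2^s)"
    by blast
  ultimately show ?thesis by simp
qed

lemma ltab_marks_balanced:
  assumes "\<forall>i<5. B i = 1 \<or> B i = -1"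
  shows "(\<Sum>i<5. of_bool (marked (B i) i (int (ltab (B 0) (B 1) (B 2) (B 3)) + 1)) :: int)
       = (\<Sum>i<5. of_bool (marked (B i) i (int (ltab (B 0) (B 1) (B 2) (B 3)) + 3)))"
proof -
  have "B 0 = 1 \<or> B 0 = -1" "B 1 = 1 \<or> B 1 = -1" "B 2 = 1 \<or> B 2 = -1"
    "B 3 = 1 \<or> B 3 = -1" "B 4 = 1 \<or> B 4 = -1" using assms by auto
  then show ?thesis
    unfolding marked_def by (elim disjE) (simp_all add: eval_nat_numeral ltab_def)
qed

lemma sum_marked_from:
  assumes "\<forall>k. b k = 1 \<or> b k = -1" "s + 5 \<le> N" "0 \<le> a" "a < 32"
  shows "(\<Sum>k=s..<N. of_bool (marked (b k) k (2^s * a)) :: int)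
       = (\<Sum>i<5. of_bool (marked (b (i + s)) i a))"
proof -
  have "(\<Sum>k=s..<N. of_bool (marked (b k) k (2^s * a)) :: int)
      = (\<Sum>i=0..<N-s. of_bool (marked (b (i + s)) i a))"
    using sum.shift_bounds_nat_ivl[of "\<lambda>k. of_bool (marked (b k) k (2^s * a)) :: int" 0 s "N-s"]
      assms(2) by (simp add: marked_scale)
  also have "\<dots> = (\<Sum>i=0..<5. of_bool (marked (b (i + s)) i a))
      + (\<Sum>i=5..<N-s. of_bool (marked (b (i + s)) i a))"
    by (rule sum.atLeastLessThan_concat[symmetric]) (use assms(2) in auto)
  also have "(\<Sum>i=5..<N-s. of_bool (marked (b (i + s)) i a) :: int) = 0"
  proof (rule sum.neutral, intro ballI)
    fix i assume "i \<in> {5..<N-s}"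
    then have "(2::int)^5 \<le> 2^i" by (intro power_increasing) auto
    then show "of_bool (marked (b (i + s)) i a) = (0::int)"
      using not_marked_below[of a i] assms by simp
  qed
  finally show ?thesis by (simp add: atLeast0LessThan)
qed

lemma ellt_marks_balanced:
  assumes "\<forall>k. b k = 1 \<or> b k = -1" "s + 5 \<le> N"
  shows "(\<Sum>k=s..<N. of_bool (marked (b k) k (int (ellt b s) + 2^s)) :: int)
       = (\<Sum>k=s..<N. of_bool (marked (b k) k (int (ellt b s) + 2^(s+1) + 2^s)))"
proof -
  define B where "B i = b (i + s)" for i
  define a where "a = int (ltab (B 0) (B 1) (B 2) (B 3))"
  have "ellt b s = 2^s * ltab (B 0) (B 1) (B 2) (B 3)"
    by (simp add: ellt_def B_def add.commute)
  then have "int (ellt b s) + 2^s = 2^s * (a + 1)" "int (ellt b s) + 2^(s+1) + 2^s = 2^s * (a + 3)"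
    by (simp_all add: a_def algebra_simps)
  moreover have "0 \<le> a + 1" "a + 3 < 32" by (simp_all add: a_def ltab_def)
  ultimately show ?thesis
    using sum_marked_from[OF assms, of "a + 1"] sum_marked_from[OF assms, of "a + 3"]
      ltab_marks_balanced[of B] assms(1) by (simp add: B_def a_def)
qed

lemma eps_sum_window_shift:
  assumes b: "\<forall>k. b k = 1 \<or> b k = -1" and N: "s + 5 \<le> N"
    and win: "int (ellt b s) \<le> l" "0 < d" "l + d < int (ellt b s) + 2^(s+1)"
  shows "(\<Sum>k<N. eps k (b k) (l + 2^(s+1)) (l + 2^(s+1) + d)) = (\<Sum>k<N. eps k (b k) l (l + d))"
proof -
  define L where "L = int (ellt b s)"
  define inside where "inside \<longleftrightarrow> l < L + 2^s \<and> L + 2^s \<le> l + d"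
  have split: "(\<Sum>k<N. g k) = (\<Sum>k<s. g k) + (\<Sum>k=s..<N. g k)" for g :: "nat \<Rightarrow> int"
    using sum.atLeastLessThan_concat[of 0 s N g] N by (simp add: atLeast0LessThan)
  have L: "L = 2^s * int (ltab (b s) (b (s+1)) (b (s+2)) (b (s+3)))"
    by (simp add: L_def ellt_def)
  then have L': "L + 2^(s+1) = 2^s * (int (ltab (b s) (b (s+1)) (b (s+2)) (b (s+3))) + 2)"
    by (simp add: algebra_simps)
  have low: "eps k (b k) (l + 2^(s+1)) (l + 2^(s+1) + d) = eps k (b k) l (l + d)" if "k < s" for k
    using eps_shift_power[of k "s+1" "b k" l "l + d"] that by (simp add: add_ac)
  have high: "eps k (b k) l (l + d) = of_bool (inside \<and> marked (b k) k (L + 2^s))"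
    if "s \<le> k" for k
    unfolding inside_def conj_assoc
    by (rule eps_eq_single_candidate[OF that L]) (use win in \<open>simp_all add: L_def\<close>)
  have shifted: "(l + 2^(s+1) < L + 2^(s+1) + 2^s \<and> L + 2^(s+1) + 2^s \<le> l + 2^(s+1) + d)
      \<longleftrightarrow> inside"
    unfolding inside_def by linarith
  have high': "eps k (b k) (l + 2^(s+1)) (l + 2^(s+1) + d)
      = of_bool (inside \<and> marked (b k) k (L + 2^(s+1) + 2^s))" if "s \<le> k" for k
    unfolding shifted[symmetric] conj_assoc
    by (rule eps_eq_single_candidate[OF that L']) (use win in \<open>simp_all add: L_def\<close>)
  have "(\<Sum>k<s. eps k (b k) (l + 2^(s+1)) (l + 2^(s+1) + d)) = (\<Sum>k<s. eps k (b k) l (l + d))"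
    by (rule sum.cong[OF refl], rule low) simp
  moreover have "(\<Sum>k=s..<N. eps k (b k) (l + 2^(s+1)) (l + 2^(s+1) + d))
      = (\<Sum>k=s..<N. eps k (b k) l (l + d))"
  proof -
    have "(\<Sum>k=s..<N. eps k (b k) (l + 2^(s+1)) (l + 2^(s+1) + d))
        = (\<Sum>k=s..<N. of_bool (inside \<and> marked (b k) k (L + 2^(s+1) + 2^s)))"
      by (rule sum.cong[OF refl], rule high') simp
    also have "\<dots> = of_bool inside * (\<Sum>k=s..<N. of_bool (marked (b k) k (L + 2^(s+1) + 2^s)))"
      by (simp only: of_bool_conj sum_distrib_left)
    also have "\<dots> = of_bool inside * (\<Sum>k=s..<N. of_bool (marked (b k) k (L + 2^s)))"
      by (simp only: L_def ellt_marks_balanced[OF b N, symmetric])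
    also have "\<dots> = (\<Sum>k=s..<N. of_bool (inside \<and> marked (b k) k (L + 2^s)))"
      by (simp only: of_bool_conj sum_distrib_left)
    also have "\<dots> = (\<Sum>k=s..<N. eps k (b k) l (l + d))"
      by (rule sum.cong[OF refl], rule high[symmetric]) simp
    finally show ?thesis .
  qed
  ultimately show ?thesis by (simp only: split)
qed

lemma Delta_shift_start: "Delta b (s + d * p) d j = Delta b s d (p + j)"
  unfolding Delta_def Evec_def by (simp add: algebra_simps)

lemma Delta_eq_sum_eps:
  assumes b: "\<forall>k. b k = 1 \<or> b k = -1" and "0 < d" and bound: "s + (j + 1) * d < 2^N"
  shows "Delta b s d j
    = of_int (\<Sum>k<N. eps k (b k) (int s + int j * int d) (int s + int j * int d + int d))"
proof -
  let ?e = "\<lambda>k. eps k (b k) (int s + int j * int d) (int s + int j * int d + int d)"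
  have E: "Evec k (b k) s d j = ?e k" for k by (simp add: Evec_def algebra_simps)
  have "?e k = 0" if "N \<le> k" for k
  proof (rule eps_eq_0_below)
    have "(2::nat)^N \<le> 2^k" using that by (rule power_increasing) simp
    then have "int (s + (j + 1) * d) < int (2^k)" using bound by (simp only: of_nat_less_iff)
    then show "int s + int j * int d + int d < 2^k" by (simp add: algebra_simps)
  qed (use assms in auto)
  then have "(\<lambda>k. real_of_int (?e k)) sums (\<Sum>k<N. real_of_int (?e k))"
    by (intro sums_finite) auto
  then show ?thesis unfolding Delta_def E by (simp add: sums_unique[symmetric])
qed

lemma Delta_periodic:
  assumes b: "\<forall>k. b k = 1 \<or> b k = -1" and dm: "d * m = 2^(s+1)" and q: "q + 1 < m"
  shows "Delta b (ellt b s) d (q + m) = Delta b (ellt b s) d q"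
proof -
  define L where "L = ellt b s"
  define N where "N = L + 2 * 2^(s+1) + s + 5"
  define l where "l = int L + int q * int d"
  have "0 < d" using dm by (cases d) auto
  have dm_int: "int d * int m = 2^(s+1)"
    using dm by (metis of_nat_mult of_nat_numeral of_nat_power)
  have "(q + m + 1) * d \<le> (2 * m) * d" using q by (intro mult_le_mono1) simp
  then have "(q + m + 1) * d \<le> 2 * 2^(s+1)" by (metis dm mult.assoc mult.commute)
  then have "L + (q + m + 1) * d < N" unfolding N_def by linarith
  also have "N < 2^N" by (rule less_exp)
  finally have bound: "L + (q + m + 1) * d < 2^N" .
  moreover have "(q + 1) * d \<le> (q + m + 1) * d" by simp
  ultimately have bound': "L + (q + 1) * d < 2^N" by linarith
  have "Delta b L d (q + m) = of_int (\<Sum>k<N. eps k (b k) (l + 2^(s+1)) (l + 2^(s+1) + int d))"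
    using Delta_eq_sum_eps[OF b \<open>0 < d\<close>, of L "q + m" N] bound dm_int
    by (simp add: l_def algebra_simps)
  also have "\<dots> = of_int (\<Sum>k<N. eps k (b k) l (l + int d))"
  proof (intro arg_cong[where f = of_int] eps_sum_window_shift[OF b])
    have "(q + 1) * d < m * d" using q \<open>0 < d\<close> by (intro mult_less_mono1) auto
    then have "int ((q + 1) * d) < int (m * d)" by (simp only: of_nat_less_iff)
    then have "int q * int d + int d < int d * int m" by (simp add: algebra_simps)
    then show "l + int d < int (ellt b s) + 2^(s+1)" using dm_int by (simp add: l_def L_def)
  qed (use \<open>0 < d\<close> in \<open>simp_all add: N_def l_def L_def\<close>)
  also have "\<dots> = Delta b L d q"
    using Delta_eq_sum_eps[OF b \<open>0 < d\<close>, of L q N] bound' by (simp add: l_def)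
  finally show ?thesis by (simp add: L_def)
qed

lemma sum_lessThan_shift_periodic:
  fixes f :: "nat \<Rightarrow> 'a::comm_monoid_add"
  assumes periodic: "\<And>q. q + 1 < m \<Longrightarrow> f (q + m) = f q" and "j < m"
  shows "(\<Sum>p<m. f (p + j)) = (\<Sum>p<m. f p)"
  using \<open>j < m\<close>
proof (induction j)
  case 0
  then show ?case by simp
next
  case (Suc j)
  then obtain m' where m: "m = Suc m'" by (cases m) auto
  have "(\<Sum>p<m. f (p + Suc j)) = (\<Sum>p<m'. f (Suc p + j)) + f (j + m)"
    by (simp add: m add_ac)
  also have "f (j + m) = f j" using periodic Suc.prems by simp
  also have "(\<Sum>p<m'. f (Suc p + j)) + f j = (\<Sum>p<m. f (p + j))"
    unfolding m sum.lessThan_Suc_shift by (simp add: add.commute)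
  finally show ?case using Suc by simp
qed

theorem lemma5p3:
  fixes b :: "nat \<Rightarrow> int" and t u :: nat
  assumes "\<forall>k. b k = 1 \<or> b k = -1"
    and "t \<ge> 2" and "1 \<le> u" and "u < t"
  shows "\<forall>j < 2^(t-u). \<forall>j' < 2^(t-u).
           (\<Sum>p<2^(t-u). Delta b (ellt b (t-1) + 2^u * p) (2^u) j)
         = (\<Sum>p<2^(t-u). Delta b (ellt b (t-1) + 2^u * p) (2^u) j')"
proof -
  let ?L = "ellt b (t-1)" and ?d = "2^u :: nat" and ?m = "2^(t-u) :: nat"
  have "?d * ?m = 2^(t - 1 + 1)" using assms(2,4) by (simp flip: power_add)
  then have periodic: "Delta b ?L ?d (q + ?m) = Delta b ?L ?d q" if "q + 1 < ?m" for q
    using Delta_periodic[OF assms(1)] that by blast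
  have "(\<Sum>p<?m. Delta b (?L + ?d * p) ?d j) = (\<Sum>p<?m. Delta b ?L ?d p)" if "j < ?m" for j
    unfolding Delta_shift_start
    using sum_lessThan_shift_periodic[where f = "Delta b ?L ?d", OF periodic that] by blast
  then show ?thesis by simp
qed

end
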